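(* Let $\Omega\subset\mathbb{R}^d$ ($d=2,3$) be a convex polygonal domain with a conforming mesh $\mathcal T$ of quadrilaterals/hexahedra, vertices $\vec x_i$, and let $\mathbb Q_1$ be the space of continuous piecewise bilinear (trilinear) functions on $\mathcal T$. Fix $\mathrm{Wi}>0$, $\beta\in(0,1)$, and a Dirichlet datum $\vec w$ with $\vec w\cdot\vec n=0$ on $\partial\Omega$. Consider the following fully discrete scheme for the Stokes flow of an Oldroyd-B fluid. Let $\vec\Sigma^0_h$ be the bilinear (trilinear) interpolant of a symmetric initial conformation tensor $\boldsymbol\sigma^0$. For $n\ge1$: (i) find $\vec u^n_h\in\mathbb Q_1^d$ with $\vec u^n_h|_{\partial\Omega}=\Pi_1\vec w$ and $p^n_h\in\mathbb Q_1$ with $$2\beta\int_\Omega\varepsilon(\vec u^n_h):\varepsilon(\vec v_h)-\int_\Omega p^n_h\operatorname{div}\vec v_h-\int_\Omega q_h\operatorname{div}\vec u^n_h-\int_\Omega(p^n_h-\Pi_0p^n_h)(q_h-\Pi_0q_h)=\frac{\beta-1}{\mathrm{Wi}}\int_\Omega\vec\Sigma^{n-1}_h:\varepsilon(\vec v_h)$$ for all $\vec v_h\in\mathbb Q_1^d$ vanishing on $\partial\Omega$ and all $q_h\in\mathbb Q_1$; (ii) at each vertex $\vec x_i$ compute $$\tfrac{1}{\Delta t}\big(\vec\Sigma^n_h(\vec x_i)-\vec F^n_{h,\Delta t}(\vec x_i)\,\vec\Sigma^{n-1}_h(\vec y^n_{h,\Delta t}(\vec x_i))\,\vec F^n_{h,\Delta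 t}(\vec x_i)^T\big)+\tfrac{1}{\mathrm{Wi}}(\vec\Sigma^n_h(\vec x_i)-\vec I)=0,$$ where $\vec y^n_{h,\Delta t}(\vec x)=\vec x-\Delta t\,\vec u^n_h(\vec x)$, $\vec F^n_{h,\Delta t}(\vec x_i)=\vec I+\Delta t\,\nabla\vec u^n_h(\vec x_i)$ with $\nabla\vec u^n_h(\vec x_i):=\frac{1}{|\hat{\vec x}_i|}\sum_{K\subseteq\hat{\vec x}_i}\int_K\nabla\vec u^n_h$, and $\vec\Sigma^{n-1}_h$ is evaluated at non-vertex points by bilinear (trilinear) interpolation of its vertex values. If $\boldsymbol\sigma^0$ is positive definite, then at each time step there exists $\Delta t>0$ such that the discrete conformation tensor $\vec\Sigma^n_h$ remains positive definite.
   Context: $\varepsilon(\vec v)=\tfrac12(\nabla\vec v+(\nabla\vec v)^T)$; $\Pi_0$ is the $L^2$ projection onto piecewise constants on $\mathcal T$; $\Pi_1$ is an interpolant onto $\mathbb Q_1$ traces; $\hat{\vec x}_i=\{K\in\mathcal T:\vec x_i\in\overline K\}$ is the patch of elements around vertex $\vec x_i$; $\vec I$ is the identity. The discrete conformation tensor is stored by its values at vertices and identified with the $\mathbb Q_1$ interpolant of these values. *)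

theory Defs
  imports "HOL-Analysis.Analysis"
begin

definition unit_cube :: "(real^'d) set" where
  "unit_cube = {\<xi>. \<forall>i. 0 \<le> \<xi>$i \<and> \<xi>$i \<le> 1}"

definition corners :: "(real^'d) set" where
  "corners = {c. \<forall>i. c$i = 0 \<or> c$i = 1}"

definition shape :: "real^'d \<Rightarrow> real^'d \<Rightarrow> real" where
  "shape c \<xi> = (\<Prod>i\<in>UNIV. if c$i = 1 then \<xi>$i else 1 - \<xi>$i)"

text \<open>An element is given by its vertex labelling X (corner of the reference cube to
  physical vertex); qmap X is the bilinear/trilinear reference map.\<close>
definition qmap :: "(real^'d \<Rightarrow> real^'d) \<Rightarrow> real^'d \<Rightarrow> real^'d" where
  "qmap X \<xi> = (\<Sum>c\<in>corners. shape c \<xi> *\<^sub>R X c)"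

definition elem :: "(real^'d \<Rightarrow> real^'d) \<Rightarrow> (real^'d) set" where
  "elem X = qmap X ` unit_cube"

definition cube_face :: "(real^'d) set \<Rightarrow> bool" where
  "cube_face G \<longleftrightarrow> (\<exists>J b. b \<in> corners \<and> G = {\<xi>\<in>unit_cube. \<forall>i\<in>J. \<xi>$i = b$i})"

definition conforming :: "(real^'d \<Rightarrow> real^'d) set \<Rightarrow> bool" where
  "conforming T \<longleftrightarrow> (\<forall>X\<in>T. \<forall>X'\<in>T. elem X \<inter> elem X' = {} \<or>
     (\<exists>G G'. cube_face G \<and> cube_face G' \<and>
        elem X \<inter> elem X' = qmap X ` G \<and> elem X \<inter> elem X' = qmap X' ` G' \<and>
        X ` (corners \<inter> G) = X' ` (corners \<inter> G')))"

definition qmesh :: "(real^'d) set \<Rightarrow> (real^'d \<Rightarrow> real^'d) set \<Rightarrow> bool" where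
  "qmesh \<Omega> T \<longleftrightarrow> finite T \<and> T \<noteq> {} \<and>
     (\<forall>X\<in>T. inj_on (qmap X) unit_cube) \<and>
     \<Union>(elem ` T) = closure \<Omega> \<and>
     (\<forall>X\<in>T. \<forall>X'\<in>T. X \<noteq> X' \<longrightarrow> interior (elem X) \<inter> interior (elem X') = {}) \<and>
     conforming T"

definition verts :: "(real^'d \<Rightarrow> real^'d) set \<Rightarrow> (real^'d) set" where
  "verts T = {X c | X c. X \<in> T \<and> c \<in> corners}"

definition q1_fun :: "(real^'d) set \<Rightarrow> (real^'d \<Rightarrow> real^'d) set \<Rightarrow> (real^'d \<Rightarrow> 'b::real_normed_vector) \<Rightarrow> bool" where
  "q1_fun \<Omega> T f \<longleftrightarrow> continuous_on (closure \<Omega>) f \<and>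
     (\<forall>X\<in>T. \<forall>\<xi>\<in>unit_cube. f (qmap X \<xi>) = (\<Sum>c\<in>corners. shape c \<xi> *\<^sub>R f (X c)))"

definition grad :: "(real^'d \<Rightarrow> real^'d) \<Rightarrow> real^'d \<Rightarrow> real^'d^'d" where
  "grad u x = jacobian u (at x)"

definition eps :: "(real^'d \<Rightarrow> real^'d) \<Rightarrow> real^'d \<Rightarrow> real^'d^'d" where
  "eps u x = (1/2) *\<^sub>R (grad u x + transpose (grad u x))"

definition divg :: "(real^'d \<Rightarrow> real^'d) \<Rightarrow> real^'d \<Rightarrow> real" where
  "divg u x = trace (grad u x)"

definition frob :: "real^'d^'d \<Rightarrow> real^'d^'d \<Rightarrow> real" where
  "frob A B = (\<Sum>i\<in>UNIV. \<Sum>j\<in>UNIV. A$i$j * B$i$j)"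

definition pos_def :: "real^'d^'d \<Rightarrow> bool" where
  "pos_def A \<longleftrightarrow> transpose A = A \<and> (\<forall>v. v \<noteq> 0 \<longrightarrow> v \<bullet> (A *v v) > 0)"

definition pi0 :: "(real^'d \<Rightarrow> real^'d) set \<Rightarrow> (real^'d \<Rightarrow> real) \<Rightarrow> real^'d \<Rightarrow> real" where
  "pi0 T f x = (if \<exists>X\<in>T. x \<in> interior (elem X)
     then (let X = (SOME X. X \<in> T \<and> x \<in> interior (elem X))
           in integral (elem X) f / measure lebesgue (elem X))
     else 0)"

text \<open>w \<cdot> n = 0 on the boundary of the convex polytope closure \<Omega> (on every facet).\<close>
definition tangential :: "(real^'d) set \<Rightarrow> (real^'d \<Rightarrow> real^'d) \<Rightarrow> bool" where
  "tangential \<Omega> w \<longleftrightarrow> (\<forall>a b. closure \<Omega> \<subseteq> {y. a \<bullet> y \<le> b} \<and>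
      (closure \<Omega> \<inter> {y. a \<bullet> y = b}) facet_of (closure \<Omega>) \<longrightarrow>
      (\<forall>x \<in> closure \<Omega> \<inter> {y. a \<bullet> y = b}. w x \<bullet> a = 0))"

definition stokes_step :: "(real^'d) set \<Rightarrow> (real^'d \<Rightarrow> real^'d) set \<Rightarrow> real \<Rightarrow> real \<Rightarrow>
    (real^'d \<Rightarrow> real^'d) \<Rightarrow> (real^'d \<Rightarrow> real^'d^'d) \<Rightarrow> (real^'d \<Rightarrow> real^'d) \<Rightarrow> (real^'d \<Rightarrow> real) \<Rightarrow> bool" where
  "stokes_step \<Omega> T \<beta> Wi w \<Sigma> u p \<longleftrightarrow>
     q1_fun \<Omega> T u \<and> q1_fun \<Omega> T p \<and>
     (\<forall>x\<in>verts T \<inter> frontier \<Omega>. u x = w x) \<and>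
     (\<forall>v q. q1_fun \<Omega> T v \<and> (\<forall>x\<in>frontier \<Omega>. v x = 0) \<and> q1_fun \<Omega> T q \<longrightarrow>
        2 * \<beta> * integral \<Omega> (\<lambda>x. frob (eps u x) (eps v x))
        - integral \<Omega> (\<lambda>x. p x * divg v x)
        - integral \<Omega> (\<lambda>x. q x * divg u x)
        - integral \<Omega> (\<lambda>x. (p x - pi0 T p x) * (q x - pi0 T q x))
        = (\<beta> - 1) / Wi * integral \<Omega> (\<lambda>x. frob (\<Sigma> x) (eps v x)))"

definition patch_grad :: "(real^'d \<Rightarrow> real^'d) set \<Rightarrow> (real^'d \<Rightarrow> real^'d) \<Rightarrow> real^'d \<Rightarrow> real^'d^'d" where
  "patch_grad T u x =
     (1 / measure lebesgue (\<Union>{elem X | X. X \<in> T \<and> x \<in> elem X})) *\<^sub>R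
     (\<Sum>X\<in>{X\<in>T. x \<in> elem X}. integral (elem X) (\<lambda>z. jacobian u (at z within elem X)))"

text \<open>Step (ii) at a vertex x: S is the new value \<Sigma>^n_h(x).\<close>
definition transport_eq :: "(real^'d \<Rightarrow> real^'d) set \<Rightarrow> real \<Rightarrow> real \<Rightarrow> (real^'d \<Rightarrow> real^'d) \<Rightarrow>
    (real^'d \<Rightarrow> real^'d^'d) \<Rightarrow> real^'d \<Rightarrow> real^'d^'d \<Rightarrow> bool" where
  "transport_eq T Wi dt u \<Sigma> x S \<longleftrightarrow>
     (let y = x - dt *\<^sub>R u x;
          F = mat 1 + dt *\<^sub>R patch_grad T u x
      in (1 / dt) *\<^sub>R (S - F ** \<Sigma> y ** transpose F) + (1 / Wi) *\<^sub>R (S - mat 1) = 0)"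

text \<open>Conformation tensors reachable by the scheme from the interpolant of \<sigma>0,
  each time step being taken with some \<Delta>t > 0 that kept the tensor positive definite.\<close>
inductive admissible for \<Omega> :: "(real^'d) set" and T \<beta> Wi w \<sigma>0 where
  base: "q1_fun \<Omega> T \<Sigma> \<Longrightarrow> (\<forall>x\<in>verts T. \<Sigma> x = \<sigma>0 x) \<Longrightarrow> admissible \<Omega> T \<beta> Wi w \<sigma>0 \<Sigma>"
| step: "admissible \<Omega> T \<beta> Wi w \<sigma>0 \<Sigma> \<Longrightarrow> stokes_step \<Omega> T \<beta> Wi w \<Sigma> u p \<Longrightarrow> dt > 0 \<Longrightarrow>
         q1_fun \<Omega> T \<Sigma>' \<Longrightarrow> (\<forall>x\<in>verts T. transport_eq T Wi dt u \<Sigma> x (\<Sigma>' x)) \<Longrightarrow>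
         (\<forall>x\<in>verts T. pos_def (\<Sigma>' x)) \<Longrightarrow> admissible \<Omega> T \<beta> Wi w \<sigma>0 \<Sigma>'"

end

theory Submission
  imports Defs
begin

text \<open>Solved for the new vertex value, the transport step reads
  \<Sigma>(x) = (F \<Sigma>'(y) F^T / \<Delta>t + I / Wi) / (1 / \<Delta>t + 1 / Wi), with \<Sigma>' the previous tensor;
  this is positive definite as soon as \<Sigma>'(y) is, since the identity term is strictly positive.
  A Q1 function with positive definite vertex values is positive definite everywhere, being
  pointwise a combination of vertex values with nonnegative weights, the weight of the nearest
  corner being positive. So it suffices to take \<Delta>t so small that every foot point
  y = x - \<Delta>t u(x) of a vertex x stays in the closed polytope: the constraints of the facets
  not through x are strict at x and survive a small step, and on the facets through x the
  velocity equals the tangential boundary datum, so y stays on them.\<close>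

lemma transpose_add_matrix: "transpose (A + B :: 'a::semiring_1^'n^'m) = transpose A + transpose B"
  by (simp add: transpose_def vec_eq_iff)

lemma transpose_sum_matrix:
  "finite C \<Longrightarrow> transpose (\<Sum>c\<in>C. f c :: 'a::semiring_1^'n^'m) = (\<Sum>c\<in>C. transpose (f c))"
  by (induction C rule: finite_induct) (simp_all add: transpose_def vec_eq_iff)

lemma quadratic_form_sum_scaleR:
  "finite C \<Longrightarrow>
     v \<bullet> ((\<Sum>c\<in>C. s c *\<^sub>R A c) *v v) = (\<Sum>c\<in>C. s c * (v \<bullet> (A c *v v :: real^'n)))"
  by (induction C rule: finite_induct)
     (simp_all add: matrix_vector_mult_add_rdistrib inner_add_right
        scaleR_matrix_vector_assoc[symmetric])

lemma quadratic_form_congruence: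
  fixes F :: "real^'m^'n" and A :: "real^'m^'m" and v :: "real^'n"
  shows "v \<bullet> ((F ** A ** transpose F) *v v) = (transpose F *v v) \<bullet> (A *v (transpose F *v v))"
proof -
  have "(F ** A ** transpose F) *v v = F *v (A *v (transpose F *v v))"
    by (simp only: matrix_vector_mul_assoc matrix_mul_assoc)
  then show ?thesis
    by (simp only: transpose_matrix_vector dot_lmul_matrix)
qed

lemma pos_def_quadratic_form_nonneg: "pos_def A \<Longrightarrow> 0 \<le> v \<bullet> (A *v v)"
  by (cases "v = 0") (simp_all add: pos_def_def less_imp_le)

lemma pos_def_sum_scaleR:
  assumes "finite C" and "\<And>c. c \<in> C \<Longrightarrow> 0 \<le> s c" and "c0 \<in> C" and "0 < s c0"
    and "\<And>c. c \<in> C \<Longrightarrow> pos_def (A c)"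
  shows "pos_def (\<Sum>c\<in>C. s c *\<^sub>R (A c :: real^'n^'n))"
  unfolding pos_def_def
proof safe
  show "transpose (\<Sum>c\<in>C. s c *\<^sub>R A c) = (\<Sum>c\<in>C. s c *\<^sub>R A c)"
    using assms by (simp add: transpose_sum_matrix transpose_scalar pos_def_def)
  fix v :: "real^'n"
  assume "v \<noteq> 0"
  then have "0 < v \<bullet> (A c *v v)" if "c \<in> C" for c
    using assms(5)[OF that] by (simp add: pos_def_def)
  then show "0 < v \<bullet> ((\<Sum>c\<in>C. s c *\<^sub>R A c) *v v)"
    unfolding quadratic_form_sum_scaleR[OF assms(1)]
    using assms by (intro sum_pos2[where i=c0]) (auto intro: mult_nonneg_nonneg less_imp_le)
qed

lemma transport_solution_pos_def:
  fixes S :: "real^'n^'n" and F :: "real^'m^'n" and A :: "real^'m^'m"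
  assumes "0 < dt" and "0 < Wi" and "pos_def A"
    and eq: "(1 / dt) *\<^sub>R (S - F ** A ** transpose F) + (1 / Wi) *\<^sub>R (S - mat 1) = 0"
  shows "pos_def S"
proof -
  define M where "M = F ** A ** transpose F"
  define k where "k = 1 / dt + 1 / Wi"
  have "0 < k"
    using assms by (simp add: k_def add_pos_pos)
  have kS: "k *\<^sub>R S = (1 / dt) *\<^sub>R M + (1 / Wi) *\<^sub>R mat 1"
    using eq by (simp add: M_def k_def vec_eq_iff algebra_simps)
  have S: "S = (1 / k) *\<^sub>R ((1 / dt) *\<^sub>R M + (1 / Wi) *\<^sub>R mat 1)"
    using \<open>0 < k\<close> by (simp flip: kS)
  have "transpose A = A"
    using \<open>pos_def A\<close> by (simp add: pos_def_def)
  then have "transpose M = M"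
    unfolding M_def by (simp only: matrix_transpose_mul transpose_transpose matrix_mul_assoc)
  have M_nonneg: "0 \<le> v \<bullet> (M *v v)" for v
    unfolding M_def quadratic_form_congruence
    using \<open>pos_def A\<close> by (rule pos_def_quadratic_form_nonneg)
  show ?thesis
    unfolding pos_def_def
  proof safe
    show "transpose S = S"
      unfolding S by (simp add: transpose_scalar transpose_add_matrix \<open>transpose M = M\<close>)
    fix v :: "real^'n"
    assume "v \<noteq> 0"
    have "v \<bullet> (S *v v) = (1 / k) * ((1 / dt) * (v \<bullet> (M *v v)) + (1 / Wi) * (v \<bullet> v))"
      unfolding S
      by (simp add: matrix_vector_mult_add_rdistrib scaleR_matrix_vector_assoc[symmetric]
          inner_add_right)
    also have "\<dots> > 0"
      using assms \<open>0 < k\<close> M_nonneg[of v] \<open>v \<noteq> 0\<close> by (intro mult_pos_pos add_nonneg_pos) auto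
    finally show "0 < v \<bullet> (S *v v)" .
  qed
qed

lemma transport_eq_pos_def:
  assumes "0 < dt" and "0 < Wi" and "pos_def (\<Sigma> (x - dt *\<^sub>R u x))"
    and "transport_eq T Wi dt u \<Sigma> x S"
  shows "pos_def S"
  using transport_solution_pos_def[OF assms(1-3)] assms(4)
  by (simp only: transport_eq_def Let_def)

lemma corners_subset_unit_cube: "corners \<subseteq> unit_cube"
  unfolding corners_def unit_cube_def by (smt (verit) mem_Collect_eq subsetI)

lemma finite_corners: "finite (corners :: (real^'d) set)"
proof -
  have "inj_on (\<lambda>c::real^'d. {i. c$i = 1}) corners"
  proof (rule inj_onI, subst vec_eq_iff, rule allI)
    fix c c' :: "real^'d" and i
    assume "c \<in> corners" "c' \<in> corners" and "{i. c$i = 1} = {i. c'$i = 1}"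
    then have "c$i = 0 \<or> c$i = 1" "c'$i = 0 \<or> c'$i = 1" "c$i = 1 \<longleftrightarrow> c'$i = 1"
      by (auto simp: corners_def)
    then show "c$i = c'$i"
      by auto
  qed
  moreover have "finite ((\<lambda>c::real^'d. {i. c$i = 1}) ` corners)"
    by simp
  ultimately show ?thesis
    using finite_imageD by blast
qed

lemma shape_corner:
  assumes "c \<in> corners" and "c' \<in> corners"
  shows "shape c' c = (if c' = c then 1 else 0)"
proof (cases "c' = c")
  case True
  have "(if c$i = 1 then c$i else 1 - c$i) = 1" for i
    using assms(1) by (auto simp: corners_def)
  then show ?thesis
    using True by (simp add: shape_def)
next
  case False
  then obtain i where "c'$i \<noteq> c$i"
    by (auto simp: vec_eq_iff)
  moreover have "c$i = 0 \<or> c$i = 1" "c'$i = 0 \<or> c'$i = 1"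
    using assms by (simp_all add: corners_def)
  ultimately have "(if c'$i = 1 then c$i else 1 - c$i) = 0"
    by auto
  then have "shape c' c = 0"
    unfolding shape_def by (intro prod_zero) (simp, blast)
  then show ?thesis
    using False by simp
qed

lemma qmap_corner:
  assumes "c \<in> corners"
  shows "qmap X c = X c"
proof -
  have "qmap X c = (\<Sum>c'\<in>corners. if c' = c then X c' else 0)"
    unfolding qmap_def using assms by (intro sum.cong) (simp_all add: shape_corner)
  also have "\<dots> = X c"
    using assms by (simp add: finite_corners)
  finally show ?thesis .
qed

lemma shape_nonneg: "\<xi> \<in> unit_cube \<Longrightarrow> 0 \<le> shape c \<xi>"
  unfolding shape_def unit_cube_def by (intro prod_nonneg) auto

lemma shape_nearest_corner_pos:
  "\<xi> \<in> unit_cube \<Longrightarrow> 0 < shape (\<chi> i. if 1/2 \<le> \<xi>$i then 1 else 0) \<xi>"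
  unfolding shape_def unit_cube_def by (intro prod_pos) auto

lemma verts_subset_closure:
  assumes "qmesh \<Omega> T"
  shows "verts T \<subseteq> closure \<Omega>"
proof
  fix x
  assume "x \<in> verts T"
  then obtain X c where "X \<in> T" "c \<in> corners" "x = qmap X c"
    by (auto simp: verts_def qmap_corner)
  then have "x \<in> elem X"
    using corners_subset_unit_cube by (auto simp: elem_def)
  then show "x \<in> closure \<Omega>"
    using \<open>X \<in> T\<close> assms by (auto simp: qmesh_def)
qed

lemma finite_verts:
  assumes "qmesh \<Omega> T"
  shows "finite (verts T)"
proof -
  have "verts T = (\<lambda>(X, c). X c) ` (T \<times> corners)"
    by (auto simp: verts_def)
  then show ?thesis
    using assms by (simp add: qmesh_def finite_corners)
qed

lemma q1_fun_pos_def: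
  fixes f :: "real^'d \<Rightarrow> real^'n^'n"
  assumes "qmesh \<Omega> T" and "q1_fun \<Omega> T f" and "\<forall>x\<in>verts T. pos_def (f x)"
    and "y \<in> closure \<Omega>"
  shows "pos_def (f y)"
proof -
  have "y \<in> \<Union>(elem ` T)"
    using assms(1,4) by (simp add: qmesh_def)
  then obtain X \<xi> where "X \<in> T" and \<xi>: "\<xi> \<in> unit_cube" and "y = qmap X \<xi>"
    unfolding elem_def by blast
  then have "f y = (\<Sum>c\<in>corners. shape c \<xi> *\<^sub>R f (X c))"
    using assms(2) by (simp add: q1_fun_def)
  also have "pos_def \<dots>"
  proof (rule pos_def_sum_scaleR[OF finite_corners])
    show "(\<chi> i. if 1/2 \<le> \<xi>$i then 1 else 0) \<in> corners"
      by (simp add: corners_def)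
    show "pos_def (f (X c))" if "c \<in> corners" for c
      using assms(3) \<open>X \<in> T\<close> that by (auto simp: verts_def)
    show "0 \<le> shape c \<xi>" for c
      using \<xi> by (rule shape_nonneg)
    show "0 < shape (\<chi> i. if 1/2 \<le> \<xi>$i then 1 else 0) \<xi>"
      using \<xi> by (rule shape_nearest_corner_pos)
  qed
  finally show ?thesis .
qed

lemma admissible_pos_def_verts:
  assumes "admissible \<Omega> T \<beta> Wi w \<sigma>0 \<Sigma>" and "qmesh \<Omega> T"
    and "\<forall>x\<in>closure \<Omega>. pos_def (\<sigma>0 x)"
  shows "q1_fun \<Omega> T \<Sigma> \<and> (\<forall>x\<in>verts T. pos_def (\<Sigma> x))"
  using assms(1)
proof induction
  case (base \<Sigma>)
  then show ?case
    using assms(3) verts_subset_closure[OF assms(2)] by auto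
qed simp

lemma closure_open_polyhedron_facet_halfspaces:
  fixes \<Omega> :: "'n::euclidean_space set"
  assumes "open \<Omega>" and "\<Omega> \<noteq> {}" and "polyhedron (closure \<Omega>)"
  obtains H :: "('n \<times> real) set" where "finite H"
    and "closure \<Omega> = {x. \<forall>(a, b)\<in>H. a \<bullet> x \<le> b}"
    and "\<And>a b. (a, b) \<in> H \<Longrightarrow> a \<noteq> 0 \<and> (closure \<Omega> \<inter> {x. a \<bullet> x = b}) facet_of closure \<Omega>"
proof -
  obtain F where F: "finite F" "closure \<Omega> = affine hull (closure \<Omega>) \<inter> \<Inter>F"
      "\<forall>h\<in>F. \<exists>a b. a \<noteq> 0 \<and> h = {x. a \<bullet> x \<le> b}"
      "\<forall>F'. F' \<subset> F \<longrightarrow> closure \<Omega> \<subset> affine hull (closure \<Omega>) \<inter> \<Inter>F'"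
    using assms(3) unfolding polyhedron_Int_affine_minimal by blast
  then obtain a b where ab: "\<forall>h\<in>F. a h \<noteq> 0 \<and> h = {x. a h \<bullet> x \<le> b h}"
    by metis
  have "affine hull (closure \<Omega>) = UNIV"
    using closure_same_affine_hull affine_hull_open[OF assms(1,2)] by simp
  then have "closure \<Omega> = \<Inter>F"
    using F(2) by simp
  also have "\<dots> = {x. \<forall>(a, b)\<in>(\<lambda>h. (a h, b h)) ` F. a \<bullet> x \<le> b}"
    using ab by auto
  finally have closure: "closure \<Omega> = {x. \<forall>(a, b)\<in>(\<lambda>h. (a h, b h)) ` F. a \<bullet> x \<le> b}" .
  have facet: "(closure \<Omega> \<inter> {x. a h \<bullet> x = b h}) facet_of closure \<Omega>" if "h \<in> F" for h
  proof -
    have "(closure \<Omega> \<inter> {x. a h \<bullet> x = b h} facet_of closure \<Omega>) \<longleftrightarrow>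
        (\<exists>h'. h' \<in> F \<and> closure \<Omega> \<inter> {x. a h \<bullet> x = b h} = closure \<Omega> \<inter> {x. a h' \<bullet> x = b h'})"
      by (rule facet_of_polyhedron_explicit[OF F(1,2)]) (use ab F(4) in auto)
    then show ?thesis
      using that by blast
  qed
  show ?thesis
  proof (rule that[OF _ closure])
    show "finite ((\<lambda>h. (a h, b h)) ` F)"
      using F(1) by simp
    fix a' b'
    assume "(a', b') \<in> (\<lambda>h. (a h, b h)) ` F"
    then obtain h where "h \<in> F" "a' = a h" "b' = b h"
      by auto
    then show "a' \<noteq> 0 \<and> (closure \<Omega> \<inter> {x. a' \<bullet> x = b'}) facet_of closure \<Omega>"
      using ab facet by simp
  qed
qed

lemma eventually_foot_point_in_closure:
  fixes \<Omega> :: "(real^'n) set"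
  assumes "open \<Omega>" and "\<Omega> \<noteq> {}" and "polyhedron (closure \<Omega>)" and "tangential \<Omega> w"
    and "x \<in> closure \<Omega>" and "x \<in> frontier \<Omega> \<Longrightarrow> v = w x"
  shows "\<forall>\<^sub>F dt in at_right 0. x - dt *\<^sub>R v \<in> closure \<Omega>"
proof -
  obtain H where "finite H" and closure: "closure \<Omega> = {x. \<forall>(a, b)\<in>H. a \<bullet> x \<le> b}"
    and facets: "\<And>a b. (a, b) \<in> H \<Longrightarrow> a \<noteq> 0 \<and> (closure \<Omega> \<inter> {x. a \<bullet> x = b}) facet_of closure \<Omega>"
    using closure_open_polyhedron_facet_halfspaces[OF assms(1-3)] by blast
  have "\<forall>\<^sub>F dt in at_right 0. a \<bullet> (x - dt *\<^sub>R v) \<le> b" if "(a, b) \<in> H" for a b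
  proof (cases "a \<bullet> x < b")
    case True
    have "((\<lambda>dt. a \<bullet> (x - dt *\<^sub>R v)) \<longlongrightarrow> a \<bullet> (x - 0 *\<^sub>R v)) (at_right 0)"
      by (intro tendsto_intros)
    then have "\<forall>\<^sub>F dt in at_right 0. a \<bullet> (x - dt *\<^sub>R v) < b"
      using True by (simp add: order_tendstoD(2))
    then show ?thesis
      by (rule eventually_mono) simp
  next
    case False
    have halfspace: "closure \<Omega> \<subseteq> {y. a \<bullet> y \<le> b}"
      unfolding closure using that by fastforce
    then have on_facet: "a \<bullet> x = b"
      using False assms(5) by fastforce
    have "\<Omega> \<subseteq> interior {y. a \<bullet> y \<le> b}"
      using order.trans[OF closure_subset halfspace] assms(1) by (rule interior_maximal)
    also have "\<dots> = {y. a \<bullet> y < b}"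
      using facets[OF that] by simp
    finally have "x \<notin> \<Omega>"
      using on_facet by blast
    then have "v = w x"
      using assms(1,5,6) by (simp add: frontier_def interior_open)
    moreover have "w x \<bullet> a = 0"
      using assms(4)[unfolded tangential_def, rule_format, OF conjI[OF halfspace], of x]
        facets[OF that] assms(5) on_facet by blast
    ultimately show ?thesis
      by (simp add: inner_diff_right inner_commute on_facet)
  qed
  then have "\<forall>\<^sub>F dt in at_right 0. \<forall>(a, b)\<in>H. a \<bullet> (x - dt *\<^sub>R v) \<le> b"
    using \<open>finite H\<close> by (simp add: eventually_ball_finite_distrib case_prod_beta)
  then show ?thesis
    by (rule eventually_mono) (simp add: closure)
qed

lemma exists_time_step_foot_points_in_closure:
  fixes \<Omega> :: "(real^'n) set"
  assumes "open \<Omega>" and "\<Omega> \<noteq> {}" and "polyhedron (closure \<Omega>)" and "tangential \<Omega> w"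
    and "finite V" and "V \<subseteq> closure \<Omega>" and "\<forall>x\<in>V \<inter> frontier \<Omega>. u x = w x"
  obtains dt where "0 < dt" and "\<forall>x\<in>V. x - dt *\<^sub>R u x \<in> closure \<Omega>"
proof -
  have "\<forall>x\<in>V. \<forall>\<^sub>F dt in at_right 0. x - dt *\<^sub>R u x \<in> closure \<Omega>"
  proof
    fix x
    assume "x \<in> V"
    then show "\<forall>\<^sub>F dt in at_right 0. x - dt *\<^sub>R u x \<in> closure \<Omega>"
      using assms(6,7) by (intro eventually_foot_point_in_closure[OF assms(1-4)]) auto
  qed
  then have "\<forall>\<^sub>F dt in at_right 0. 0 < dt \<and> (\<forall>x\<in>V. x - dt *\<^sub>R u x \<in> closure \<Omega>)"
    using assms(5)
    by (simp add: eventually_conj_iff eventually_at_right_less eventually_ball_finite_distrib)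
  then show ?thesis
    using that eventually_happens'[OF trivial_limit_at_right_real] by blast
qed

theorem proposition5:
  fixes \<Omega> :: "(real^'d) set" and T :: "(real^'d \<Rightarrow> real^'d) set"
    and \<beta> Wi :: real and w :: "real^'d \<Rightarrow> real^'d"
    and \<sigma>0 \<Sigma> :: "real^'d \<Rightarrow> real^'d^'d"
    and u :: "real^'d \<Rightarrow> real^'d" and p :: "real^'d \<Rightarrow> real"
  assumes "CARD('d) = 2 \<or> CARD('d) = 3"
    and "open \<Omega>" and "convex \<Omega>" and "bounded \<Omega>" and "\<Omega> \<noteq> {}"
    and "polytope (closure \<Omega>)"
    and "qmesh \<Omega> T"
    and "Wi > 0" and "0 < \<beta>" and "\<beta> < 1"
    and "tangential \<Omega> w"
    and "\<forall>x\<in>closure \<Omega>. pos_def (\<sigma>0 x)"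
    and "admissible \<Omega> T \<beta> Wi w \<sigma>0 \<Sigma>"
    and "stokes_step \<Omega> T \<beta> Wi w \<Sigma> u p"
  shows "\<exists>dt>0.
     (\<forall>S. (\<forall>x\<in>verts T. transport_eq T Wi dt u \<Sigma> x (S x)) \<longrightarrow> (\<forall>x\<in>verts T. pos_def (S x))) \<and>
     (\<forall>\<Sigma>'. q1_fun \<Omega> T \<Sigma>' \<and> (\<forall>x\<in>verts T. transport_eq T Wi dt u \<Sigma> x (\<Sigma>' x)) \<longrightarrow>
        (\<forall>x\<in>closure \<Omega>. pos_def (\<Sigma>' x)))"
proof -
  obtain "q1_fun \<Omega> T \<Sigma>" and "\<forall>x\<in>verts T. pos_def (\<Sigma> x)"
    using admissible_pos_def_verts[OF assms(13,7,12)] by blast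
  moreover have "\<forall>x\<in>verts T \<inter> frontier \<Omega>. u x = w x"
    using assms(14) by (simp add: stokes_step_def)
  ultimately obtain dt where "0 < dt"
    and "\<forall>x\<in>verts T. pos_def (\<Sigma> (x - dt *\<^sub>R u x))"
    using exists_time_step_foot_points_in_closure[OF assms(2,5) polytope_imp_polyhedron[OF assms(6)]
        assms(11) finite_verts[OF assms(7)] verts_subset_closure[OF assms(7)]]
      q1_fun_pos_def[OF assms(7)] by metis
  then have vertex_pos_def: "\<forall>x\<in>verts T. pos_def (S x)"
    if "\<forall>x\<in>verts T. transport_eq T Wi dt u \<Sigma> x (S x)" for S
    using that transport_eq_pos_def[OF \<open>0 < dt\<close> assms(8)] by blast
  show ?thesis
    using \<open>0 < dt\<close> vertex_pos_def q1_fun_pos_def[OF assms(7)] by blast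
qed

end
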